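(* Consider $J=2$ classes with sample sizes $n_1,n_2\ge 2$ and $n=n_1+n_2$. Suppose one of the following holds: (i) $\tilde h_b(1,2)>\tilde h_b(1,1)>\tilde h_b(2,2)$ and $n_1>n_2+1$; (ii) $\tilde h_b(1,2)>\tilde h_b(2,2)>\tilde h_b(1,1)$ and $n_1<n_2-1$; (iii) $\tilde h_b(1,1)>\tilde h_b(1,2)\ge\frac34\tilde h_b(1,1)+\frac14\tilde h_b(2,2)>\tilde h_b(2,2)$ and $n_1>1+\frac{n-1}{2}\Big\{\frac{\tilde h_b(1,1)-\tilde h_b(2,2)}{2\tilde h_b(1,2)-\tilde h_b(1,1)-\tilde h_b(2,2)}\Big\}$; (iv) $\tilde h_b(2,2)>\tilde h_b(1,2)\ge\frac14\tilde h_b(1,1)+\frac34\tilde h_b(2,2)>\tilde h_b(1,1)$ and $n_1<(n-1)\Big\{1-\frac12\frac{\tilde h_b(2,2)-\tilde h_b(1,1)}{2\tilde h_b(1,2)-\tilde h_b(1,1)-\tilde h_b(2,2)}\Big\}$. Then $\tilde\xi_b(1,2)>\max\{\tilde\tau_b(1,2),\tilde\tau_b(2,1)\}$.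
   Context: $\tilde h_b(l,l')$ ($l,l'\in\{1,2\}$) are real numbers with $\tilde h_b(1,2)=\tilde h_b(2,1)$ (in the paper, $\tilde h_b(l,l')=\phi\big[b^{-1}\sum_{i=1}^b\mathrm E\gamma(d_i^{-1}\|\mathbf U_i-\mathbf V_i\|^2)\big]$ for independent $\mathbf U\sim\mathbf F_l$, $\mathbf V\sim\mathbf F_{l'}$ with sub-vectors on clusters of coordinates). $\tilde\xi_b(1,2)=\tilde h_b(1,2)-\frac12[\tilde h_b(1,1)+\tilde h_b(2,2)]$; $\tilde\tau_b(1,2)=\frac{n_1}{n-1}|\tilde h_b(1,2)-\tilde h_b(1,1)|+\frac{n_2-1}{n-1}|\tilde h_b(1,2)-\tilde h_b(2,2)|$; $\tilde\tau_b(2,1)=\frac{n_1-1}{n-1}|\tilde h_b(1,2)-\tilde h_b(1,1)|+\frac{n_2}{n-1}|\tilde h_b(1,2)-\tilde h_b(2,2)|$. *)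

theory Defs
  imports Complex_Main
begin

text \<open>The quantities h_b(1,1), h_b(1,2)=h_b(2,1), h_b(2,2) are treated as arbitrary reals
  h11, h12, h22; n = n1 + n2.\<close>

definition xi12 :: "real \<Rightarrow> real \<Rightarrow> real \<Rightarrow> real" where
  "xi12 h11 h12 h22 = h12 - (h11 + h22) / 2"

definition tau12 :: "nat \<Rightarrow> nat \<Rightarrow> real \<Rightarrow> real \<Rightarrow> real \<Rightarrow> real" where
  "tau12 n1 n2 h11 h12 h22 =
     real n1 / (real (n1 + n2) - 1) * \<bar>h12 - h11\<bar>
     + (real n2 - 1) / (real (n1 + n2) - 1) * \<bar>h12 - h22\<bar>"

definition tau21 :: "nat \<Rightarrow> nat \<Rightarrow> real \<Rightarrow> real \<Rightarrow> real \<Rightarrow> real" where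
  "tau21 n1 n2 h11 h12 h22 =
     (real n1 - 1) / (real (n1 + n2) - 1) * \<bar>h12 - h11\<bar>
     + real n2 / (real (n1 + n2) - 1) * \<bar>h12 - h22\<bar>"

end

theory Submission
  imports Defs
begin

(* With N = n - 1, the numerators of N tau12 and N tau21 differ by |h12 - h11| - |h12 - h22|,
   so N max(tau12, tau21) = (n1 - 1)|h12 - h11| + (n2 - 1)|h12 - h22| + max(|h12 - h11|, |h12 - h22|).
   In each case the signs of h12 - h11 and h12 - h22 are fixed, and N xi12 minus this quantity is a
   linear expression whose positivity is exactly the sample-size condition. Cases (ii) and (iv)
   are cases (i) and (iii) with the two classes interchanged. *)

lemma xi12_swap: "xi12 h22 h12 h11 = xi12 h11 h12 h22"
  by (simp add: xi12_def add.commute)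

lemma tau12_swap: "tau12 n2 n1 h22 h12 h11 = tau21 n1 n2 h11 h12 h22"
  by (simp add: tau12_def tau21_def add.commute)

lemma tau21_swap: "tau21 n2 n1 h22 h12 h11 = tau12 n1 n2 h11 h12 h22"
  by (simp add: tau12_def tau21_def add.commute)

lemma max_tau_lt_xi12_swap:
  "max (tau12 n2 n1 h22 h12 h11) (tau21 n2 n1 h22 h12 h11) < xi12 h22 h12 h11
   \<longleftrightarrow> max (tau12 n1 n2 h11 h12 h22) (tau21 n1 n2 h11 h12 h22) < xi12 h11 h12 h22"
  by (metis xi12_swap tau12_swap tau21_swap max.commute)

lemma max_tau_eq:
  assumes "2 \<le> n1 + n2"
  shows "max (tau12 n1 n2 h11 h12 h22) (tau21 n1 n2 h11 h12 h22)
    = ((real n1 - 1) * \<bar>h12 - h11\<bar> + (real n2 - 1) * \<bar>h12 - h22\<bar>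
        + max \<bar>h12 - h11\<bar> \<bar>h12 - h22\<bar>) / (real (n1 + n2) - 1)"
proof -
  define S where "S = (real n1 - 1) * \<bar>h12 - h11\<bar> + (real n2 - 1) * \<bar>h12 - h22\<bar>"
  have N: "real (n1 + n2) - 1 > 0"
    using assms by linarith
  have "S + \<bar>h12 - h11\<bar> = real n1 * \<bar>h12 - h11\<bar> + (real n2 - 1) * \<bar>h12 - h22\<bar>"
    and "S + \<bar>h12 - h22\<bar> = (real n1 - 1) * \<bar>h12 - h11\<bar> + real n2 * \<bar>h12 - h22\<bar>"
    by (simp_all add: S_def algebra_simps)
  then have "tau12 n1 n2 h11 h12 h22 = (S + \<bar>h12 - h11\<bar>) / (real (n1 + n2) - 1)"
    and "tau21 n1 n2 h11 h12 h22 = (S + \<bar>h12 - h22\<bar>) / (real (n1 + n2) - 1)"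
    unfolding tau12_def tau21_def by (simp_all add: add_divide_distrib)
  with N show ?thesis
    by (simp add: S_def max_divide_distrib_right max_add_distrib_right add.assoc)
qed

lemma max_tau_lt_xi12_iff:
  assumes "2 \<le> n1 + n2"
  shows "max (tau12 n1 n2 h11 h12 h22) (tau21 n1 n2 h11 h12 h22) < xi12 h11 h12 h22
    \<longleftrightarrow> (real n1 - 1) * \<bar>h12 - h11\<bar> + (real n2 - 1) * \<bar>h12 - h22\<bar>
        + max \<bar>h12 - h11\<bar> \<bar>h12 - h22\<bar> < (real (n1 + n2) - 1) * xi12 h11 h12 h22"
proof -
  have "real (n1 + n2) - 1 > 0"
    using assms by linarith
  then show ?thesis
    by (simp add: max_tau_eq[OF assms] pos_divide_less_eq mult.commute)
qed

lemma max_tau_lt_xi12_of_h22_lt_h11_le_h12: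
  assumes "h22 < h11" "h11 \<le> h12" "real n2 + 1 < real n1"
  shows "max (tau12 n1 n2 h11 h12 h22) (tau21 n1 n2 h11 h12 h22) < xi12 h11 h12 h22"
proof -
  have n: "2 \<le> n1 + n2"
    using assms(3) by linarith
  have abs: "\<bar>h12 - h11\<bar> = h12 - h11" "\<bar>h12 - h22\<bar> = h12 - h22"
    and max: "max (h12 - h11) (h12 - h22) = h12 - h22"
    using assms by auto
  have "(real (n1 + n2) - 1) * xi12 h11 h12 h22
      - ((real n1 - 1) * (h12 - h11) + (real n2 - 1) * (h12 - h22) + (h12 - h22))
      = (h11 - h22) * (real n1 - real n2 - 1) / 2"
    by (simp add: xi12_def field_simps)
  moreover have "0 < (h11 - h22) * (real n1 - real n2 - 1)"
    using assms by simp
  ultimately show ?thesis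
    unfolding max_tau_lt_xi12_iff[OF n] abs max by linarith
qed

lemma max_tau_lt_xi12_of_mid_lt_h12_le_h11:
  assumes "2 \<le> n1 + n2" "h11 + h22 < 2 * h12" "h12 \<le> h11"
    and "real n1 > 1 + (real (n1 + n2) - 1) / 2 * ((h11 - h22) / (2 * h12 - h11 - h22))"
  shows "max (tau12 n1 n2 h11 h12 h22) (tau21 n1 n2 h11 h12 h22) < xi12 h11 h12 h22"
proof -
  define D where "D = 2 * h12 - h11 - h22"
  have "D > 0"
    using assms(2) by (simp add: D_def)
  have abs: "\<bar>h12 - h11\<bar> = h11 - h12" "\<bar>h12 - h22\<bar> = h12 - h22"
    and max: "max (h11 - h12) (h12 - h22) = h12 - h22"
    using assms(2,3) by auto
  have "(real (n1 + n2) - 1) * (h11 - h22) / 2 < (real n1 - 1) * D"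
    using assms(4) \<open>D > 0\<close> unfolding D_def[symmetric] by (simp add: field_simps)
  moreover have "(real (n1 + n2) - 1) * xi12 h11 h12 h22
      - ((real n1 - 1) * (h11 - h12) + (real n2 - 1) * (h12 - h22) + (h12 - h22))
      = (real n1 - 1) * D - (real (n1 + n2) - 1) * (h11 - h22) / 2"
    by (simp add: xi12_def D_def field_simps)
  ultimately show ?thesis
    unfolding max_tau_lt_xi12_iff[OF assms(1)] abs max by linarith
qed

lemma max_tau_lt_xi12_of_mid_lt_h12_le_h22:
  assumes "2 \<le> n1 + n2" "h11 + h22 < 2 * h12" "h12 \<le> h22"
    and n1: "real n1 < (real (n1 + n2) - 1) * (1 - 1/2 * ((h22 - h11) / (2 * h12 - h11 - h22)))"
  shows "max (tau12 n1 n2 h11 h12 h22) (tau21 n1 n2 h11 h12 h22) < xi12 h11 h12 h22"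
proof -
  have "(real (n1 + n2) - 1) * (1 - 1/2 * ((h22 - h11) / (2 * h12 - h11 - h22)))
    = real n1 + real n2 - 1 - (real (n2 + n1) - 1) / 2 * ((h22 - h11) / (2 * h12 - h22 - h11))"
    by (simp add: algebra_simps)
  with n1 have "real n2 > 1 + (real (n2 + n1) - 1) / 2 * ((h22 - h11) / (2 * h12 - h22 - h11))"
    by linarith
  with assms(1-3) show ?thesis
    by (subst max_tau_lt_xi12_swap[symmetric], intro max_tau_lt_xi12_of_mid_lt_h12_le_h11) auto
qed

theorem lemmaA2:
  fixes n1 n2 :: nat and h11 h12 h22 :: real
  assumes "n1 \<ge> 2" and "n2 \<ge> 2"
  assumes "(h12 > h11 \<and> h11 > h22 \<and> real n1 > real n2 + 1)
    \<or> (h12 > h22 \<and> h22 > h11 \<and> real n1 < real n2 - 1)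
    \<or> (h11 > h12 \<and> h12 \<ge> 3/4 * h11 + 1/4 * h22 \<and> 3/4 * h11 + 1/4 * h22 > h22 \<and>
        real n1 > 1 + (real (n1 + n2) - 1) / 2 * ((h11 - h22) / (2 * h12 - h11 - h22)))
    \<or> (h22 > h12 \<and> h12 \<ge> 1/4 * h11 + 3/4 * h22 \<and> 1/4 * h11 + 3/4 * h22 > h11 \<and>
        real n1 < (real (n1 + n2) - 1) * (1 - 1/2 * ((h22 - h11) / (2 * h12 - h11 - h22))))"
  shows "xi12 h11 h12 h22 > max (tau12 n1 n2 h11 h12 h22) (tau21 n1 n2 h11 h12 h22)"
proof -
  have n: "2 \<le> n1 + n2"
    using assms(1,2) by simp
  from assms(3) show ?thesis
  proof (elim disjE conjE)
    assume "h12 > h11" "h11 > h22" "real n1 > real n2 + 1"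
    then show ?thesis
      by (intro max_tau_lt_xi12_of_h22_lt_h11_le_h12) auto
  next
    assume "h12 > h22" "h22 > h11" "real n1 < real n2 - 1"
    then show ?thesis
      by (subst max_tau_lt_xi12_swap[symmetric], intro max_tau_lt_xi12_of_h22_lt_h11_le_h12) auto
  next
    assume "h11 > h12" "h12 \<ge> 3/4 * h11 + 1/4 * h22" "3/4 * h11 + 1/4 * h22 > h22"
      "real n1 > 1 + (real (n1 + n2) - 1) / 2 * ((h11 - h22) / (2 * h12 - h11 - h22))"
    then show ?thesis
      by (intro max_tau_lt_xi12_of_mid_lt_h12_le_h11 n) auto
  next
    assume "h22 > h12" "h12 \<ge> 1/4 * h11 + 3/4 * h22" "1/4 * h11 + 3/4 * h22 > h11"
      "real n1 < (real (n1 + n2) - 1) * (1 - 1/2 * ((h22 - h11) / (2 * h12 - h11 - h22)))"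
    then show ?thesis
      by (intro max_tau_lt_xi12_of_mid_lt_h12_le_h22 n) auto
  qed
qed

end
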